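(* Let $W$ be a positive word such that either there exist positive words $A_1,\dots,A_{n-1}$ with $$W\doteq\sigma_1A_1\doteq\sigma_2A_2\doteq\cdots\doteq\sigma_{n-1}A_{n-1},$$ or there exist positive words $B_1,\dots,B_{n-1}$ with $$W\doteq B_1\sigma_1\doteq B_2\sigma_2\doteq\cdots\doteq B_{n-1}\sigma_{n-1}.$$ Then $W\doteq\Delta Z$ for some positive word $Z$.
   Context: Fix $n\ge 2$. The positive singular braid monoid $SB_n^+$ is the monoid with generators $\sigma_1,\dots,\sigma_{n-1},x_1,\dots,x_{n-1}$ and relations: $\sigma_i\sigma_j=\sigma_j\sigma_i$ and $x_ix_j=x_jx_i$ if $|i-j|>1$; $x_i\sigma_j=\sigma_jx_i$ if $|i-j|\ne 1$; $\sigma_i\sigma_{i+1}\sigma_i=\sigma_{i+1}\sigma_i\sigma_{i+1}$; $\sigma_i\sigma_{i+1}x_i=x_{i+1}\sigma_i\sigma_{i+1}$; $\sigma_{i+1}\sigma_ix_{i+1}=x_i\sigma_{i+1}\sigma_i$. A positive word is a word in the letters $\sigma_i,x_i$; $A\doteq B$ means they represent the same element of $SB_n^+$. Garside's fundamental word is $\Delta\equiv\sigma_1\cdots\sigma_{n-1}\,\sigma_1\cdots\sigma_{n-2}\cdots\sigma_1\sigma_2\,\sigma_1$. *)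

theory Defs
  imports Main
begin

text \<open>Letters of the positive singular braid monoid SB_n^+: Sig i is sigma_i, X i is x_i
  (indices 1 .. n-1). Positive words are lists of letters.\<close>

datatype sb_letter = Sig nat | X nat

type_synonym sb_word = "sb_letter list"

definition valid_word :: "nat \<Rightarrow> sb_word \<Rightarrow> bool" where
  "valid_word n w \<longleftrightarrow> (\<forall>l\<in>set w. case l of Sig i \<Rightarrow> 1 \<le> i \<and> i \<le> n - 1
                                            | X i \<Rightarrow> 1 \<le> i \<and> i \<le> n - 1)"

inductive sb_rel :: "nat \<Rightarrow> sb_word \<Rightarrow> sb_word \<Rightarrow> bool" for n where
  comm_ss: "\<lbrakk>1 \<le> i; i \<le> n - 1; 1 \<le> j; j \<le> n - 1; i + 1 < j \<or> j + 1 < i\<rbrakk>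
             \<Longrightarrow> sb_rel n [Sig i, Sig j] [Sig j, Sig i]"
| comm_xx: "\<lbrakk>1 \<le> i; i \<le> n - 1; 1 \<le> j; j \<le> n - 1; i + 1 < j \<or> j + 1 < i\<rbrakk>
             \<Longrightarrow> sb_rel n [X i, X j] [X j, X i]"
| comm_xs: "\<lbrakk>1 \<le> i; i \<le> n - 1; 1 \<le> j; j \<le> n - 1; i \<noteq> j + 1; j \<noteq> i + 1\<rbrakk>
             \<Longrightarrow> sb_rel n [X i, Sig j] [Sig j, X i]"
| braid: "\<lbrakk>1 \<le> i; i + 1 \<le> n - 1\<rbrakk>
             \<Longrightarrow> sb_rel n [Sig i, Sig (i+1), Sig i] [Sig (i+1), Sig i, Sig (i+1)]"
| mixed1: "\<lbrakk>1 \<le> i; i + 1 \<le> n - 1\<rbrakk>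
             \<Longrightarrow> sb_rel n [Sig i, Sig (i+1), X i] [X (i+1), Sig i, Sig (i+1)]"
| mixed2: "\<lbrakk>1 \<le> i; i + 1 \<le> n - 1\<rbrakk>
             \<Longrightarrow> sb_rel n [Sig (i+1), Sig i, X (i+1)] [X i, Sig (i+1), Sig i]"

inductive sb_eq :: "nat \<Rightarrow> sb_word \<Rightarrow> sb_word \<Rightarrow> bool" for n where
  sb_refl: "sb_eq n w w"
| sb_step: "\<lbrakk>sb_rel n u v \<or> sb_rel n v u; sb_eq n (p @ v @ q) w\<rbrakk> \<Longrightarrow> sb_eq n (p @ u @ q) w"

text \<open>Garside's fundamental word sigma_1..sigma_{n-1} sigma_1..sigma_{n-2} ... sigma_1.\<close>
definition Delta :: "nat \<Rightarrow> sb_word" where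
  "Delta n = concat (map (\<lambda>k. map Sig [1..<n - k]) [0..<n - 1])"

end

theory Submission
  imports Defs
begin

text \<open>
  The defining relations of \<open>SB\<^sub>n\<^sup>+\<close> are complemented: two distinct letters \<open>a\<close>, \<open>b\<close>
  begin the two sides of at most one relation \<open>a r = b s\<close>. Dehornoy's word reversing, with
  the cube condition on triples of letters checked by computation, shows by induction on length
  that the monoid is left cancellative and that \<open>a U \<doteq> b V\<close> with \<open>a \<noteq> b\<close> forces both
  sides to be right multiples of \<open>a r = b s\<close>. Hence a word left divisible by
  \<open>\<sigma>\<^sub>1, \<dots>, \<sigma>\<^sub>m\<close> is left divisible by \<open>\<sigma>\<^sub>1 \<cdot> \<sigma>\<^sub>2\<sigma>\<^sub>1 \<cdots> \<sigma>\<^sub>m\<cdots>\<sigma>\<^sub>1\<close>; for \<open>m = n - 1\<close>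
  this is \<open>\<Delta>\<close> read backwards, which is equivalent to \<open>\<Delta>\<close>. Reversing words is an
  anti-automorphism, so right divisibility by all \<open>\<sigma>\<^sub>i\<close> gives \<open>W \<doteq> Z \<Delta>\<close>; finally
  \<open>Z \<Delta> \<doteq> \<Delta> Z'\<close>, because for each letter \<open>a\<close> the word \<open>a \<Delta>\<close> is again left
  divisible by every \<open>\<sigma>\<^sub>j\<close> and hence equals \<open>\<Delta> a'\<close>.
\<close>

section \<open>The congruence on positive words\<close>

lemma sb_rel_length: "sb_rel n u v \<Longrightarrow> length u = length v"
  by (induction rule: sb_rel.induct) auto

lemma sb_eq_length: "sb_eq n u v \<Longrightarrow> length u = length v"
  by (induction rule: sb_eq.induct) (auto dest: sb_rel_length)

lemma sb_eq_trans [trans]: "sb_eq n u v \<Longrightarrow> sb_eq n v w \<Longrightarrow> sb_eq n u w"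
proof (induction rule: sb_eq.induct)
  case (sb_refl w)
  then show ?case .
next
  case (sb_step u v p q w')
  then show ?case by (blast intro: sb_eq.sb_step)
qed

lemma sb_eq_rel: "sb_rel n u v \<or> sb_rel n v u \<Longrightarrow> sb_eq n (p @ u @ q) (p @ v @ q)"
  by (rule sb_eq.sb_step[OF _ sb_eq.sb_refl]) simp

lemma sb_eq_sym: "sb_eq n u v \<Longrightarrow> sb_eq n v u"
proof (induction rule: sb_eq.induct)
  case (sb_refl w)
  show ?case by (rule sb_eq.sb_refl)
next
  case (sb_step u v p q w)
  have "sb_eq n (p @ v @ q) (p @ u @ q)"
    using sb_step.hyps(1) by (intro sb_eq_rel) blast
  with sb_step.IH show ?case by (rule sb_eq_trans)
qed

lemma sb_eq_append_cong: "sb_eq n u v \<Longrightarrow> sb_eq n (x @ u @ y) (x @ v @ y)"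
proof (induction rule: sb_eq.induct)
  case (sb_refl w)
  show ?case by (rule sb_eq.sb_refl)
next
  case (sb_step u v p q w)
  then have "sb_eq n ((x @ p) @ u @ (q @ y)) (x @ w @ y)"
    by (intro sb_eq.sb_step[OF sb_step.hyps(1)]) simp
  then show ?case by simp
qed

lemma sb_eq_append_left: "sb_eq n u v \<Longrightarrow> sb_eq n (w @ u) (w @ v)"
  using sb_eq_append_cong[of n u v w "[]"] by simp

lemma sb_eq_append_right: "sb_eq n u v \<Longrightarrow> sb_eq n (u @ w) (v @ w)"
  using sb_eq_append_cong[of n u v "[]" w] by simp

lemma sb_eq_Cons: "sb_eq n u v \<Longrightarrow> sb_eq n (a # u) (a # v)"
  using sb_eq_append_cong[of n u v "[a]" "[]"] by simp

lemma sb_rel_Suc_intros: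
  "1 \<le> i \<Longrightarrow> Suc i \<le> n - 1 \<Longrightarrow> sb_rel n [Sig i, Sig (Suc i), Sig i] [Sig (Suc i), Sig i, Sig (Suc i)]"
  "1 \<le> i \<Longrightarrow> Suc i \<le> n - 1 \<Longrightarrow> sb_rel n [Sig i, Sig (Suc i), X i] [X (Suc i), Sig i, Sig (Suc i)]"
  "1 \<le> i \<Longrightarrow> Suc i \<le> n - 1 \<Longrightarrow> sb_rel n [Sig (Suc i), Sig i, X (Suc i)] [X i, Sig (Suc i), Sig i]"
  using sb_rel.braid sb_rel.mixed1 sb_rel.mixed2 by simp_all

lemma sb_rel_rev: "sb_rel n u v \<Longrightarrow> sb_rel n (rev u) (rev v) \<or> sb_rel n (rev v) (rev u)"
  by (induction rule: sb_rel.induct) (auto intro: sb_rel.intros sb_rel_Suc_intros)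

lemma sb_eq_rev: "sb_eq n u v \<Longrightarrow> sb_eq n (rev u) (rev v)"
proof (induction rule: sb_eq.induct)
  case (sb_refl w)
  show ?case by (rule sb_eq.sb_refl)
next
  case (sb_step u v p q w)
  have "sb_eq n (rev q @ rev u @ rev p) (rev q @ rev v @ rev p)"
    using sb_step.hyps(1) sb_rel_rev by (intro sb_eq_rel) blast
  then show ?case
    using sb_step.IH by (auto intro: sb_eq_trans)
qed

fun valid_letter :: "nat \<Rightarrow> sb_letter \<Rightarrow> bool" where
  "valid_letter n (Sig i) \<longleftrightarrow> 1 \<le> i \<and> i \<le> n - 1"
| "valid_letter n (X i) \<longleftrightarrow> 1 \<le> i \<and> i \<le> n - 1"

lemma valid_word_iff: "valid_word n w \<longleftrightarrow> (\<forall>l\<in>set w. valid_letter n l)"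
proof -
  have "valid_letter n l \<longleftrightarrow> (case l of Sig i \<Rightarrow> 1 \<le> i \<and> i \<le> n - 1 | X i \<Rightarrow> 1 \<le> i \<and> i \<le> n - 1)" for l
    by (cases l) auto
  then show ?thesis by (simp add: valid_word_def)
qed

lemma valid_word_simps [simp]:
  "valid_word n []"
  "valid_word n (a # w) \<longleftrightarrow> valid_letter n a \<and> valid_word n w"
  "valid_word n (u @ v) \<longleftrightarrow> valid_word n u \<and> valid_word n v"
  by (auto simp: valid_word_iff)

lemma sb_rel_valid: "sb_rel n u v \<Longrightarrow> valid_word n u \<and> valid_word n v"
  by (induction rule: sb_rel.induct) auto

lemma sb_eq_valid: "sb_eq n u v \<Longrightarrow> valid_word n u \<Longrightarrow> valid_word n v"
  by (induction rule: sb_eq.induct) (auto dest: sb_rel_valid)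

section \<open>Complements of letters and word reversing\<close>

text \<open>\<open>complement a b = Some (r, s)\<close> iff \<open>a r = b s\<close> is a defining relation (in either
  orientation). It is undefined exactly for \<open>a = b\<close> and for \<open>x\<^sub>i, x\<^sub>i\<^sub>\<plusminus>\<^sub>1\<close>, which
  have no common right multiple.\<close>

fun complement :: "sb_letter \<Rightarrow> sb_letter \<Rightarrow> (sb_word \<times> sb_word) option" where
  "complement (Sig i) (Sig j) =
     (if i + 1 < j \<or> j + 1 < i then Some ([Sig j], [Sig i])
      else if j = i + 1 \<or> i = j + 1 then Some ([Sig j, Sig i], [Sig i, Sig j]) else None)"
| "complement (X i) (X j) = (if i + 1 < j \<or> j + 1 < i then Some ([X j], [X i]) else None)"
| "complement (X i) (Sig j) =
     (if i = j + 1 \<or> j = i + 1 then Some ([Sig j, Sig i], [Sig i, X j]) else Some ([Sig j], [X i]))"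
| "complement (Sig j) (X i) =
     (if i = j + 1 \<or> j = i + 1 then Some ([Sig i, X j], [Sig j, Sig i]) else Some ([X i], [Sig j]))"

lemma complement_swap: "complement a b = Some (r, s) \<Longrightarrow> complement b a = Some (s, r)"
  by (cases a; cases b) (auto split: if_splits)

lemma complement_neq: "complement a b = Some (r, s) \<Longrightarrow> a \<noteq> b"
  by (cases a; cases b) (auto split: if_splits)

lemma complement_valid:
  "complement a b = Some (r, s) \<Longrightarrow> valid_letter n a \<Longrightarrow> valid_letter n b
   \<Longrightarrow> valid_word n r \<and> valid_word n s"
  by (cases a; cases b) (auto split: if_splits)

lemma complement_sb_rel:
  "complement a b = Some (r, s) \<Longrightarrow> valid_letter n a \<Longrightarrow> valid_letter n b
   \<Longrightarrow> sb_rel n (a # r) (b # s) \<or> sb_rel n (b # s) (a # r)"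
  by (cases a; cases b) (auto split: if_splits intro: sb_rel.intros sb_rel_Suc_intros)

lemma complement_sb_eq:
  "complement a b = Some (r, s) \<Longrightarrow> valid_letter n a \<Longrightarrow> valid_letter n b
   \<Longrightarrow> sb_eq n (a # r) (b # s)"
  using sb_eq_rel[of n "a # r" "b # s" "[]" "[]"] complement_sb_rel by auto

lemma sb_rel_complement:
  "sb_rel n u v \<Longrightarrow> \<exists>a r b s. u = a # r \<and> v = b # s \<and> complement a b = Some (r, s)
     \<and> valid_letter n a \<and> valid_letter n b"
  by (induction rule: sb_rel.induct) auto

datatype reversal = Stuck | Out_of_fuel | Reversed sb_word sb_word

text \<open>Right reversing with fuel \<open>f\<close>: the leading letters \<open>a \<noteq> b\<close> of \<open>u\<close> and \<open>v\<close> are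
  replaced through their complement until one side is exhausted, yielding \<open>u'\<close>, \<open>v'\<close> with
  \<open>u u' \<doteq> v v'\<close>. \<open>Stuck\<close> records two letters without complement.\<close>

fun right_reverse :: "nat \<Rightarrow> sb_word \<Rightarrow> sb_word \<Rightarrow> reversal" where
  "right_reverse 0 u v = Out_of_fuel"
| "right_reverse (Suc f) [] v = Reversed v []"
| "right_reverse (Suc f) u [] = Reversed [] u"
| "right_reverse (Suc f) (a # u) (b # v) =
     (if a = b then right_reverse f u v else
      case complement a b of
        None \<Rightarrow> Stuck
      | Some (r, s) \<Rightarrow>
          (case right_reverse f u r of
             Reversed u1 r1 \<Rightarrow>
               (case right_reverse f v (s @ r1) of
                  Reversed v1 w1 \<Rightarrow> Reversed (u1 @ w1) v1
                | e \<Rightarrow> e)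
           | e \<Rightarrow> e))"

lemma right_reverse_sound:
  "right_reverse f u v = Reversed u' v' \<Longrightarrow> valid_word n u \<Longrightarrow> valid_word n v
   \<Longrightarrow> sb_eq n (u @ u') (v @ v') \<and> valid_word n u' \<and> valid_word n v'"
proof (induction f u v arbitrary: u' v' rule: right_reverse.induct)
  case (4 f a u b v)
  show ?case
  proof (cases "a = b")
    case True
    then show ?thesis using "4.IH"(1) "4.prems" by (auto intro: sb_eq_Cons)
  next
    case False
    then obtain r s where rs: "complement a b = Some (r, s)"
      using "4.prems"(1) by (auto split: option.splits)
    then obtain u1 r1 where ur: "right_reverse f u r = Reversed u1 r1"
      using "4.prems"(1) False by (auto split: reversal.splits)
    then obtain v1 w1 where vw: "right_reverse f v (s @ r1) = Reversed v1 w1"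
      using "4.prems"(1) False rs by (auto split: reversal.splits)
    have result: "u' = u1 @ w1" "v' = v1"
      using "4.prems"(1) False rs ur vw by auto
    have valid: "valid_letter n a" "valid_letter n b" "valid_word n u" "valid_word n v"
      using "4.prems"(2,3) by auto
    with rs have valid_rs: "valid_word n r" "valid_word n s"
      using complement_valid by blast+
    have IH1: "sb_eq n (u @ u1) (r @ r1)" "valid_word n u1" "valid_word n r1"
      using "4.IH"(2)[OF False rs refl ur] valid valid_rs by auto
    have IH2: "sb_eq n (v @ v1) (s @ r1 @ w1)" "valid_word n v1" "valid_word n w1"
      using "4.IH"(3)[OF False rs refl ur vw] valid valid_rs IH1 by auto
    have "sb_eq n (a # u @ u1 @ w1) (a # r @ r1 @ w1)"
      using sb_eq_Cons[OF sb_eq_append_right[OF IH1(1)]] by simp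
    also have "sb_eq n (a # r @ r1 @ w1) (b # s @ r1 @ w1)"
      using sb_eq_append_right[OF complement_sb_eq[OF rs valid(1,2)]] by simp
    also have "sb_eq n (b # s @ r1 @ w1) (b # v @ v1)"
      using sb_eq_Cons[OF sb_eq_sym[OF IH2(1)]] .
    finally show ?thesis using result IH1 IH2 by simp
  qed
qed (auto intro: sb_eq.sb_refl)

lemma right_reverse_self: "length u < f \<Longrightarrow> right_reverse f u u = Reversed [] []"
proof (induction u arbitrary: f)
  case Nil
  then show ?case by (cases f) auto
next
  case (Cons a u)
  then show ?case by (cases f) auto
qed

definition complement_decomposition :: "nat \<Rightarrow> sb_letter \<Rightarrow> sb_letter \<Rightarrow> sb_word \<Rightarrow> sb_word \<Rightarrow> bool"
  where "complement_decomposition n a b U V \<longleftrightarrow>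
    (if a = b then sb_eq n U V
     else valid_letter n a \<and> valid_letter n b \<and>
       (\<exists>r s t. complement a b = Some (r, s) \<and> sb_eq n U (r @ t) \<and> sb_eq n V (s @ t)))"

definition complement_decomposition_upto :: "nat \<Rightarrow> nat \<Rightarrow> bool"
  where "complement_decomposition_upto n k \<longleftrightarrow>
    (\<forall>a b U V. length U < k \<longrightarrow> sb_eq n (a # U) (b # V) \<longrightarrow> complement_decomposition n a b U V)"

lemma complement_decomposition_sb_eq_cong:
  "sb_eq n U U' \<Longrightarrow> sb_eq n V V' \<Longrightarrow> complement_decomposition n a b U' V'
   \<Longrightarrow> complement_decomposition n a b U V"
  unfolding complement_decomposition_def
  by (cases "a = b") (auto intro: sb_eq_trans sb_eq_sym)

lemma right_reverse_complete:
  assumes "complement_decomposition_upto n L"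
  shows "length (u @ q) \<le> L \<Longrightarrow> sb_eq n (u @ q) (v @ p) \<Longrightarrow> right_reverse f u v \<noteq> Stuck \<and>
    (\<forall>u' v'. right_reverse f u v = Reversed u' v' \<longrightarrow> (\<exists>t. sb_eq n q (u' @ t) \<and> sb_eq n p (v' @ t)))"
proof (induction f u v arbitrary: q p rule: right_reverse.induct)
  case (4 f a u b v)
  have length_u: "length (u @ q) < L"
    using "4.prems"(1) by simp
  then have decomposition: "complement_decomposition n a b (u @ q) (v @ p)"
    using assms "4.prems"(2) unfolding complement_decomposition_upto_def by auto
  show ?case
  proof (cases "a = b")
    case True
    then show ?thesis
      using "4.IH"(1)[of q p] decomposition length_u by (simp add: complement_decomposition_def)
  next
    case False
    then obtain r s t where rs: "complement a b = Some (r, s)"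
      and ut: "sb_eq n (u @ q) (r @ t)" and vt: "sb_eq n (v @ p) (s @ t)"
      using decomposition by (auto simp: complement_decomposition_def)
    have IH1: "right_reverse f u r \<noteq> Stuck \<and> (\<forall>u1 r1. right_reverse f u r = Reversed u1 r1 \<longrightarrow>
        (\<exists>t1. sb_eq n q (u1 @ t1) \<and> sb_eq n t (r1 @ t1)))"
      using "4.IH"(2)[OF False rs refl, of q t] length_u ut by simp
    show ?thesis
    proof (cases "right_reverse f u r")
      case (Reversed u1 r1)
      then obtain t1 where t1: "sb_eq n q (u1 @ t1)" "sb_eq n t (r1 @ t1)"
        using IH1 by blast
      have "sb_eq n (v @ p) ((s @ r1) @ t1)"
        using sb_eq_trans[OF vt sb_eq_append_left[OF t1(2)]] by simp
      moreover have "length (v @ p) \<le> L"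
        using sb_eq_length[OF "4.prems"(2)] length_u by simp
      ultimately have IH2: "right_reverse f v (s @ r1) \<noteq> Stuck \<and>
          (\<forall>v1 w1. right_reverse f v (s @ r1) = Reversed v1 w1 \<longrightarrow>
            (\<exists>t2. sb_eq n p (v1 @ t2) \<and> sb_eq n t1 (w1 @ t2)))"
        using "4.IH"(3)[OF False rs refl Reversed] by simp
      show ?thesis
      proof (cases "right_reverse f v (s @ r1)")
        case (Reversed v1 w1)
        then obtain t2 where t2: "sb_eq n p (v1 @ t2)" "sb_eq n t1 (w1 @ t2)"
          using IH2 by blast
        have "sb_eq n q ((u1 @ w1) @ t2)"
          using sb_eq_trans[OF t1(1) sb_eq_append_left[OF t2(2)]] by simp
        then show ?thesis
          using False rs \<open>right_reverse f u r = Reversed u1 r1\<close> Reversed t2 by auto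
      qed (use False rs \<open>right_reverse f u r = Reversed u1 r1\<close> IH2 in auto)
    qed (use False rs IH1 in auto)
  qed
qed (auto intro: sb_eq.sb_refl sb_eq_sym)

section \<open>Left cancellation and common multiples of letters\<close>

text \<open>Dehornoy's cube condition on letters, in checkable form. With \<open>c rca = a rac\<close> and
  \<open>c rcb = b rbc\<close>, any common multiple \<open>rca u = rcb v\<close> found by reversing must give a right
  multiple \<open>a rac u = b rbc v\<close> of \<open>a rab = b rba\<close>. Fuel 12 suffices for all triples.\<close>

definition cube_condition :: "sb_letter \<Rightarrow> sb_letter \<Rightarrow> sb_letter \<Rightarrow> bool" where
  "cube_condition a b c \<longleftrightarrow> distinct [a, b, c] \<longrightarrow>
     (\<forall>rca rac rcb rbc. complement c a = Some (rca, rac) \<longrightarrow> complement c b = Some (rcb, rbc) \<longrightarrow>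
        (case right_reverse 12 rca rcb of
           Stuck \<Rightarrow> True
         | Out_of_fuel \<Rightarrow> False
         | Reversed u v \<Rightarrow>
             (\<exists>rab rba w w'. complement a b = Some (rab, rba)
                \<and> right_reverse 12 (rac @ u) rab = Reversed [] w
                \<and> right_reverse 12 (rbc @ v) rba = Reversed [] w'
                \<and> right_reverse 12 w w' = Reversed [] [])))"

lemma nat_order_cases [case_names far_less less_Suc equal Suc_greater far_greater]:
  fixes i j :: nat
  obtains "i + 1 < j" | "j = Suc i" | "j = i" | "i = Suc j" | "j + 1 < i"
  by linarith

lemma cube_condition_letters:
  assumes "L \<in> {Sig, X}" "M \<in> {Sig, X}" "N \<in> {Sig, X}"
  shows "cube_condition (L i) (M j) (N k)"
  using assms
  by (cases i j rule: nat_order_cases; cases j k rule: nat_order_cases;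
      cases i k rule: nat_order_cases)
    (auto simp: cube_condition_def numeral_eq_Suc)

lemma cube_condition_holds: "cube_condition a b c"
  by (cases a; cases b; cases c) (simp_all add: cube_condition_letters)

lemma complement_decomposition_cube:
  assumes upto: "complement_decomposition_upto n k" and length: "length (rca @ q) \<le> k"
    and distinct: "distinct [a, b, c]"
    and valid: "valid_letter n a" "valid_letter n b" "valid_letter n c"
    and ca: "complement c a = Some (rca, rac)" and cb: "complement c b = Some (rcb, rbc)"
    and eq: "sb_eq n (rca @ q) (rcb @ p)"
  shows "complement_decomposition n a b (rac @ q) (rbc @ p)"
proof -
  have reverse: "right_reverse 12 rca rcb \<noteq> Stuck \<and> (\<forall>u v. right_reverse 12 rca rcb = Reversed u v
      \<longrightarrow> (\<exists>t. sb_eq n q (u @ t) \<and> sb_eq n p (v @ t)))"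
    using right_reverse_complete[OF upto length eq] .
  then obtain u v where uv: "right_reverse 12 rca rcb = Reversed u v"
    using cube_condition_holds[of a b c] distinct ca cb
    by (cases "right_reverse 12 rca rcb") (auto simp: cube_condition_def)
  with reverse obtain t where t: "sb_eq n q (u @ t)" "sb_eq n p (v @ t)"
    by blast
  obtain rab rba w w' where ab: "complement a b = Some (rab, rba)"
    and rev_a: "right_reverse 12 (rac @ u) rab = Reversed [] w"
    and rev_b: "right_reverse 12 (rbc @ v) rba = Reversed [] w'"
    and rev_w: "right_reverse 12 w w' = Reversed [] []"
    using cube_condition_holds[of a b c] distinct ca cb uv by (auto simp: cube_condition_def)
  have valid_words: "valid_word n rca" "valid_word n rac" "valid_word n rcb" "valid_word n rbc"
    "valid_word n rab" "valid_word n rba"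
    using complement_valid[OF ca] complement_valid[OF cb] complement_valid[OF ab] valid by auto
  then have "valid_word n u" "valid_word n v"
    using right_reverse_sound[OF uv] by auto
  then have a_side: "sb_eq n (rac @ u) (rab @ w)" "valid_word n w"
    and b_side: "sb_eq n (rbc @ v) (rba @ w')" "valid_word n w'"
    using right_reverse_sound[OF rev_a] right_reverse_sound[OF rev_b] valid_words by auto
  have "sb_eq n (rac @ q) (rac @ u @ t)"
    using sb_eq_append_left[OF t(1)] .
  also have "sb_eq n (rac @ u @ t) (rab @ w @ t)"
    using sb_eq_append_right[OF a_side(1)] by simp
  finally have U: "sb_eq n (rac @ q) (rab @ w @ t)" .
  have "sb_eq n (rbc @ p) (rbc @ v @ t)"
    using sb_eq_append_left[OF t(2)] .
  also have "sb_eq n (rbc @ v @ t) (rba @ w' @ t)"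
    using sb_eq_append_right[OF b_side(1)] by simp
  also have "sb_eq n (rba @ w' @ t) (rba @ w @ t)"
    using right_reverse_sound[OF rev_w a_side(2) b_side(2)]
    by (auto intro: sb_eq_append_left sb_eq_append_right sb_eq_sym)
  finally have V: "sb_eq n (rbc @ p) (rba @ w @ t)" .
  show ?thesis
    using U V distinct ab valid unfolding complement_decomposition_def by auto
qed

lemma complement_decomposition_trans:
  assumes upto: "complement_decomposition_upto n k" and length_U': "length U' = k"
    and ac: "complement_decomposition n a c U U'" and cb: "complement_decomposition n c b U' V"
  shows "complement_decomposition n a b U V"
proof (cases "a = c \<or> c = b")
  case True
  then show ?thesis
  proof
    assume "a = c"
    with ac have "sb_eq n U U'"
      by (simp add: complement_decomposition_def)
    with cb \<open>a = c\<close> show ?thesis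
      by (auto intro: complement_decomposition_sb_eq_cong sb_eq.sb_refl)
  next
    assume "c = b"
    with cb have "sb_eq n V U'"
      by (simp add: complement_decomposition_def sb_eq_sym)
    with ac \<open>c = b\<close> show ?thesis
      by (auto intro: complement_decomposition_sb_eq_cong sb_eq.sb_refl)
  qed
next
  case False
  then obtain r1 s1 q r2 s2 p where ac': "complement a c = Some (r1, s1)"
    and U: "sb_eq n U (r1 @ q)" and U'q: "sb_eq n U' (s1 @ q)"
    and cb': "complement c b = Some (r2, s2)"
    and U'p: "sb_eq n U' (r2 @ p)" and V: "sb_eq n V (s2 @ p)"
    and valid: "valid_letter n a" "valid_letter n b" "valid_letter n c"
    using ac cb by (auto simp: complement_decomposition_def)
  have ca: "complement c a = Some (s1, r1)"
    using complement_swap[OF ac'] .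
  have eq: "sb_eq n (s1 @ q) (r2 @ p)"
    using U'q U'p by (meson sb_eq_sym sb_eq_trans)
  have length: "length (s1 @ q) \<le> k"
    using sb_eq_length[OF U'q] length_U' by simp
  show ?thesis
  proof (cases "a = b")
    case True
    with ca cb' have "r2 = s1" "s2 = r1"
      by auto
    then obtain t where "sb_eq n q t" "sb_eq n p t"
      using right_reverse_complete[OF upto length eq, of "Suc (length s1)"]
        right_reverse_self[of s1] by auto
    then have "sb_eq n U (r1 @ t)" "sb_eq n V (r1 @ t)"
      using sb_eq_trans[OF U sb_eq_append_left] sb_eq_trans[OF V sb_eq_append_left] \<open>s2 = r1\<close>
      by auto
    then have "sb_eq n U V"
      by (meson sb_eq_sym sb_eq_trans)
    with True show ?thesis
      by (simp add: complement_decomposition_def)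
  next
    case False
    with \<open>\<not> (a = c \<or> c = b)\<close> have "distinct [a, b, c]"
      by auto
    then show ?thesis
      using complement_decomposition_cube[OF upto length _ valid ca cb' eq]
        complement_decomposition_sb_eq_cong[OF U V] by blast
  qed
qed

lemma sb_rel_complement_decomposition:
  assumes rel: "sb_rel n u v \<or> sb_rel n v u"
    and u: "p @ u @ q = a # U" and v: "p @ v @ q = c # U'"
  shows "complement_decomposition n a c U U'"
proof (cases p)
  case Nil
  obtain a' r c' s where "u = a' # r" "v = c' # s" "complement a' c' = Some (r, s)"
    "valid_letter n a'" "valid_letter n c'"
    using rel sb_rel_complement[of n u v] sb_rel_complement[of n v u] complement_swap by blast
  with Nil u v show ?thesis
    using complement_neq by (fastforce simp: complement_decomposition_def intro: sb_eq.sb_refl)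
next
  case (Cons x p')
  with u v have "a = c" "U = p' @ u @ q" "U' = p' @ v @ q"
    by auto
  then show ?thesis
    using sb_eq_rel[OF rel] by (simp add: complement_decomposition_def)
qed

lemma complement_decomposition_of_length:
  assumes upto: "complement_decomposition_upto n k"
  shows "sb_eq n W W' \<Longrightarrow> W = a # U \<Longrightarrow> W' = b # V \<Longrightarrow> length U = k
    \<Longrightarrow> complement_decomposition n a b U V"
proof (induction arbitrary: a U rule: sb_eq.induct)
  case (sb_refl w)
  then show ?case by (auto simp: complement_decomposition_def intro: sb_eq.sb_refl)
next
  case (sb_step u v p q w)
  have "length u = length v"
    using sb_step.hyps(1) sb_rel_length by metis
  then have "length (p @ v @ q) = Suc k"
    using arg_cong[OF sb_step.prems(1), of length] sb_step.prems(3) by simp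
  then obtain c U' where U': "p @ v @ q = c # U'" "length U' = k"
    by (cases "p @ v @ q") auto
  have "complement_decomposition n a c U U'"
    using sb_rel_complement_decomposition[OF sb_step.hyps(1) _ U'(1)] sb_step.prems(1) .
  moreover have "complement_decomposition n c b U' V"
    using sb_step.IH[OF U'(1) sb_step.prems(2) U'(2)] .
  ultimately show ?case
    using complement_decomposition_trans[OF upto U'(2)] by blast
qed

lemma complement_decomposition_upto_all: "complement_decomposition_upto n k"
proof (induction k)
  case 0
  show ?case by (simp add: complement_decomposition_upto_def)
next
  case (Suc k)
  then show ?case
    using complement_decomposition_of_length[OF Suc.IH] less_Suc_eq
    unfolding complement_decomposition_upto_def by metis
qed

theorem sb_eq_Cons_complement_decomposition:
  "sb_eq n (a # U) (b # V) \<Longrightarrow> complement_decomposition n a b U V"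
  using complement_decomposition_upto_all[of n "Suc (length U)"]
  unfolding complement_decomposition_upto_def by blast

corollary sb_eq_Cons_cancel: "sb_eq n (a # U) (a # V) \<Longrightarrow> sb_eq n U V"
  using sb_eq_Cons_complement_decomposition[of n a U a V]
  by (simp add: complement_decomposition_def)

corollary sb_eq_Cons_complement:
  "sb_eq n (a # U) (b # V) \<Longrightarrow> a \<noteq> b
   \<Longrightarrow> \<exists>r s t. complement a b = Some (r, s) \<and> sb_eq n U (r @ t) \<and> sb_eq n V (s @ t)"
  using sb_eq_Cons_complement_decomposition[of n a U b V]
  by (simp add: complement_decomposition_def)

section \<open>Divisibility by the fundamental word\<close>

definition far_sigmas :: "nat \<Rightarrow> nat \<Rightarrow> sb_word \<Rightarrow> bool"
  where "far_sigmas n j u \<longleftrightarrow> (\<forall>l\<in>set u. \<exists>i. l = Sig i \<and> 1 \<le> i \<and> i \<le> n - 1 \<and> (i + 1 < j \<or> j + 1 < i))"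

lemma far_sigmas_simps [simp]:
  "far_sigmas n j []"
  "far_sigmas n j (a # u) \<longleftrightarrow>
     (\<exists>i. a = Sig i \<and> 1 \<le> i \<and> i \<le> n - 1 \<and> (i + 1 < j \<or> j + 1 < i)) \<and> far_sigmas n j u"
  "far_sigmas n j (u @ v) \<longleftrightarrow> far_sigmas n j u \<and> far_sigmas n j v"
  by (auto simp: far_sigmas_def)

lemma far_sigmas_commute:
  "far_sigmas n j u \<Longrightarrow> 1 \<le> j \<Longrightarrow> j \<le> n - 1 \<Longrightarrow> sb_eq n (u @ Sig j # Q) (Sig j # u @ Q)"
proof (induction u)
  case Nil
  show ?case by (simp add: sb_eq.sb_refl)
next
  case (Cons a u)
  then obtain i where a: "a = Sig i" "1 \<le> i" "i \<le> n - 1" "i + 1 < j \<or> j + 1 < i"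
    by auto
  have "sb_eq n (a # u @ Sig j # Q) (a # Sig j # u @ Q)"
    using Cons by (auto intro: sb_eq_Cons)
  also have "sb_eq n (a # Sig j # u @ Q) (Sig j # a # u @ Q)"
    using sb_eq_rel[OF disjI1[OF sb_rel.comm_ss[of i n j]], of "[]" "u @ Q"] a Cons.prems by auto
  finally show ?case by simp
qed

lemma far_sigmas_left_divisor:
  "far_sigmas n j u \<Longrightarrow> sb_eq n (u @ Q) (Sig j # Y) \<Longrightarrow> \<exists>Q'. sb_eq n Q (Sig j # Q')"
proof (induction u arbitrary: Y)
  case (Cons a u)
  then obtain i where a: "a = Sig i" "i + 1 < j \<or> j + 1 < i"
    by auto
  then obtain t where "sb_eq n (u @ Q) (Sig j # t)"
    using sb_eq_Cons_complement[of n a "u @ Q" "Sig j" Y] Cons.prems(2) by auto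
  then show ?case
    using Cons.IH Cons.prems(1) by auto
qed auto

definition descending_sigmas :: "nat \<Rightarrow> sb_word"
  where "descending_sigmas j = map Sig (rev [1..<Suc j])"

definition ascending_sigmas :: "nat \<Rightarrow> sb_word"
  where "ascending_sigmas j = map Sig [1..<Suc j]"

lemma descending_sigmas_simps [simp]:
  "descending_sigmas 0 = []"
  "descending_sigmas (Suc j) = Sig (Suc j) # descending_sigmas j"
  by (simp_all add: descending_sigmas_def)

lemma far_sigmas_descending_sigmas: "j \<le> n - 1 \<Longrightarrow> far_sigmas n (Suc (Suc j)) (descending_sigmas j)"
  by (auto simp: far_sigmas_def descending_sigmas_def)

lemma descending_sigmas_join_Sig_Suc:
  "Suc j \<le> n - 1 \<Longrightarrow> sb_eq n (descending_sigmas j @ Q) (Sig (Suc j) # Y)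
   \<Longrightarrow> \<exists>Z. sb_eq n Q (descending_sigmas (Suc j) @ Z)"
proof (induction j arbitrary: Q Y)
  case 0
  then show ?case by auto
next
  case (Suc j)
  let ?D = "descending_sigmas j" and ?s = "Sig (Suc j)" and ?s' = "Sig (Suc (Suc j))"
  have "sb_eq n (?s # ?D @ Q) (?s' # Y)"
    using Suc.prems(2) by simp
  then obtain t where t: "sb_eq n (?D @ Q) (?s' # ?s # t)"
    using sb_eq_Cons_complement[of n ?s _ ?s'] by fastforce
  have far: "far_sigmas n (Suc (Suc j)) ?D"
    using far_sigmas_descending_sigmas Suc.prems(1) by simp
  then obtain Q' where Q': "sb_eq n Q (?s' # Q')"
    using far_sigmas_left_divisor[OF _ t] by blast
  have "sb_eq n (?s' # ?D @ Q') (?D @ ?s' # Q')"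
    using far_sigmas_commute[OF far] Suc.prems(1) by (auto intro: sb_eq_sym)
  also have "sb_eq n (?D @ ?s' # Q') (?D @ Q)"
    using sb_eq_append_left[OF sb_eq_sym[OF Q']] .
  also note t
  finally have "sb_eq n (?D @ Q') (?s # t)"
    by (rule sb_eq_Cons_cancel)
  then obtain Z where "sb_eq n Q' (descending_sigmas (Suc j) @ Z)"
    using Suc.IH Suc.prems(1) by force
  then have "sb_eq n Q (descending_sigmas (Suc (Suc j)) @ Z)"
    using Q' by (auto intro: sb_eq_trans sb_eq_Cons)
  then show ?case ..
qed

lemma Delta_Suc: "Delta (Suc m) = ascending_sigmas m @ Delta m"
proof (cases m)
  case (Suc m')
  have "[0..<m] = 0 # map Suc [0..<m']"
    using Suc by (simp add: upt_conv_Cons map_Suc_upt)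
  then show ?thesis
    using Suc by (simp add: Delta_def ascending_sigmas_def o_def)
qed (simp add: Delta_def ascending_sigmas_def)

lemma set_Delta: "l \<in> set (Delta m) \<Longrightarrow> \<exists>i. l = Sig i \<and> 1 \<le> i \<and> i < m"
  by (auto simp: Delta_def)

lemma valid_word_Delta: "valid_word n (Delta n)"
  unfolding valid_word_iff by (auto dest!: set_Delta)

lemma rev_Delta_Suc: "rev (Delta (Suc m)) = rev (Delta m) @ descending_sigmas m"
  by (simp add: Delta_Suc descending_sigmas_def ascending_sigmas_def rev_map)

lemma left_divisible_by_sigmas_rev_Delta:
  "m \<le> n - 1 \<Longrightarrow> (\<forall>i\<in>{1..m}. \<exists>A. sb_eq n W (Sig i # A))
   \<Longrightarrow> \<exists>Z. sb_eq n W (rev (Delta (Suc m)) @ Z)"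
proof (induction m)
  case 0
  then show ?case by (auto simp: Delta_def intro: sb_eq.sb_refl)
next
  case (Suc m)
  obtain Z where Z: "sb_eq n W (rev (Delta m) @ descending_sigmas m @ Z)"
    using Suc by (auto simp: rev_Delta_Suc)
  have "Suc m \<in> {1..Suc m}"
    by simp
  then obtain A where A: "sb_eq n W (Sig (Suc m) # A)"
    using Suc.prems(2) by blast
  have far: "far_sigmas n (Suc m) (rev (Delta m))"
    using Suc.prems by (auto simp: far_sigmas_def dest!: set_Delta)
  have "sb_eq n (rev (Delta m) @ descending_sigmas m @ Z) (Sig (Suc m) # A)"
    using Z A by (meson sb_eq_sym sb_eq_trans)
  then obtain Q where "sb_eq n (descending_sigmas m @ Z) (Sig (Suc m) # Q)"
    using far_sigmas_left_divisor[OF far] by blast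
  then obtain Z' where "sb_eq n Z (descending_sigmas (Suc m) @ Z')"
    using descending_sigmas_join_Sig_Suc Suc.prems(1) by force
  then have "sb_eq n W (rev (Delta m) @ descending_sigmas m @ descending_sigmas (Suc m) @ Z')"
    using sb_eq_trans[OF Z sb_eq_append_left[OF sb_eq_append_left]] by blast
  then show ?case
    unfolding rev_Delta_Suc append.assoc by blast
qed

lemma ascending_sigmas_Sig:
  assumes "1 \<le> h" "Suc h \<le> m" "m \<le> n - 1"
  shows "sb_eq n (ascending_sigmas m @ [Sig h]) (Sig (Suc h) # ascending_sigmas m)"
proof -
  define pre where "pre = map Sig [1..<h]"
  define post where "post = map Sig [Suc (Suc h)..<Suc m]"
  have "[1..<Suc m] = [1..<h] @ [h..<Suc m]"
    using upt_add_eq_append[of 1 h "Suc m - h"] assms by simp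
  also have "[h..<Suc m] = h # Suc h # [Suc (Suc h)..<Suc m]"
    using assms by (simp add: upt_conv_Cons)
  finally have split: "ascending_sigmas m = pre @ [Sig h, Sig (Suc h)] @ post"
    by (simp add: ascending_sigmas_def pre_def post_def)
  have far_post: "far_sigmas n h post" and far_pre: "far_sigmas n (Suc h) pre"
    using assms by (auto simp: far_sigmas_def post_def pre_def)
  let ?a = "Sig h" and ?b = "Sig (Suc h)"
  have "sb_eq n (pre @ [?a, ?b] @ post @ [?a]) (pre @ [?a, ?b, ?a] @ post)"
    using sb_eq_append_left[OF far_sigmas_commute[OF far_post, of "[]"], of "pre @ [?a, ?b]"] assms
    by simp
  also have "sb_eq n (pre @ [?a, ?b, ?a] @ post) (pre @ [?b, ?a, ?b] @ post)"
    using sb_eq_rel[OF disjI1[OF sb_rel_Suc_intros(1)]] assms by simp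
  also have "sb_eq n (pre @ [?b, ?a, ?b] @ post) (?b # pre @ [?a, ?b] @ post)"
    using far_sigmas_commute[OF far_pre] assms by simp
  finally show ?thesis
    unfolding split by simp
qed

lemma Delta_left_divisible_Sig:
  "1 \<le> i \<Longrightarrow> i \<le> m \<Longrightarrow> m \<le> n - 1 \<Longrightarrow> \<exists>Y. sb_eq n (Delta (Suc m)) (Sig i # Y)"
proof (induction m arbitrary: i)
  case (Suc m)
  show ?case
  proof (cases "i = 1")
    case True
    then show ?thesis
      using upt_conv_Cons[of 1 "Suc (Suc m)"]
      by (auto simp: Delta_Suc[of "Suc m"] ascending_sigmas_def intro: sb_eq.sb_refl)
  next
    case False
    then obtain h where h: "i = Suc h" "1 \<le> h"
      using Suc.prems by (cases i) auto
    then obtain Y where "sb_eq n (Delta (Suc m)) (Sig h # Y)"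
      using Suc by auto
    then have "sb_eq n (Delta (Suc (Suc m))) (ascending_sigmas (Suc m) @ [Sig h] @ Y)"
      unfolding Delta_Suc[of "Suc m"] by (auto intro: sb_eq_append_left)
    also have "sb_eq n (ascending_sigmas (Suc m) @ [Sig h] @ Y)
        (Sig (Suc h) # ascending_sigmas (Suc m) @ Y)"
      using sb_eq_append_right[OF ascending_sigmas_Sig[of h "Suc m" n]] h Suc.prems by simp
    finally show ?thesis
      using h by blast
  qed
qed simp

lemma Delta_sb_eq_rev: "sb_eq n (Delta n) (rev (Delta n))"
proof (cases n)
  case (Suc m)
  then obtain Z where Z: "sb_eq n (Delta n) (rev (Delta n) @ Z)"
    using left_divisible_by_sigmas_rev_Delta[of m n "Delta n"] Delta_left_divisible_Sig[of _ m n]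
    by auto
  then have "Z = []"
    using sb_eq_length[OF Z] by simp
  with Z show ?thesis by simp
qed (simp add: Delta_def sb_eq.sb_refl)

lemma left_divisible_by_sigmas_Delta:
  "\<forall>i\<in>{1..n-1}. \<exists>A. sb_eq n W (Sig i # A) \<Longrightarrow> \<exists>Z. sb_eq n W (Delta n @ Z)"
proof (cases n)
  case (Suc m)
  assume "\<forall>i\<in>{1..n-1}. \<exists>A. sb_eq n W (Sig i # A)"
  then obtain Z where "sb_eq n W (rev (Delta n) @ Z)"
    using left_divisible_by_sigmas_rev_Delta[of m n W] Suc by auto
  then have "sb_eq n W (Delta n @ Z)"
    using sb_eq_trans sb_eq_append_right[OF sb_eq_sym[OF Delta_sb_eq_rev]] by blast
  then show ?thesis ..
qed (auto simp: Delta_def intro: sb_eq.sb_refl)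

lemma Delta_left_divisible_complement:
  assumes a: "valid_letter n a" and j: "1 \<le> j" "j \<le> n - 1"
    and rs: "complement a (Sig j) = Some (r, s)"
  shows "\<exists>Y. sb_eq n (Delta n) (r @ Y)"
proof -
  obtain m where m: "n = Suc m"
    using j by (cases n) auto
  have divisible: "\<exists>Y. sb_eq n (Delta n) (Sig i # Y)" if "1 \<le> i" "i \<le> n - 1" for i
    using Delta_left_divisible_Sig[of i m n] that m by simp
  consider "r = [Sig j]" | h where "r = [Sig j, Sig h]" "h = Suc j \<or> j = Suc h" "1 \<le> h" "h \<le> n - 1"
    using a rs by (cases a) (auto split: if_splits)
  then show ?thesis
  proof cases
    case 1
    then show ?thesis using divisible j by simp
  next
    case (2 h)
    \<comment> \<open>\<open>\<Delta>\<close> is left divisible by \<open>\<sigma>\<^sub>j\<close> and \<open>\<sigma>\<^sub>h\<close>, hence by \<open>\<sigma>\<^sub>j \<sigma>\<^sub>h \<sigma>\<^sub>j = \<sigma>\<^sub>h \<sigma>\<^sub>j \<sigma>\<^sub>h\<close>\<close>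
    obtain Y1 Y2 where Y1: "sb_eq n (Delta n) (Sig j # Y1)" and Y2: "sb_eq n (Delta n) (Sig h # Y2)"
      using divisible j 2 by meson
    have "sb_eq n (Sig j # Y1) (Sig h # Y2)"
      using Y1 Y2 by (meson sb_eq_sym sb_eq_trans)
    then obtain t where "sb_eq n Y1 ([Sig h, Sig j] @ t)"
      using sb_eq_Cons_complement[of n "Sig j" Y1 "Sig h" Y2] 2 by auto
    then have "sb_eq n (Delta n) (r @ Sig j # t)"
      using sb_eq_trans[OF Y1 sb_eq_Cons] 2 by auto
    then show ?thesis ..
  qed
qed

lemma letter_Delta_conjugate:
  assumes a: "valid_letter n a"
  obtains a' where "valid_letter n a'" "sb_eq n (a # Delta n) (Delta n @ [a'])"
proof -
  have "\<exists>A. sb_eq n (a # Delta n) (Sig j # A)" if j: "j \<in> {1..n-1}" for j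
  proof (cases "a = Sig j")
    case False
    then have "complement a (Sig j) \<noteq> None"
      by (cases a) auto
    then obtain r s where rs: "complement a (Sig j) = Some (r, s)"
      by auto
    obtain Y where "sb_eq n (Delta n) (r @ Y)"
      using Delta_left_divisible_complement[OF a _ _ rs] j by auto
    then have "sb_eq n (a # Delta n) (a # r @ Y)"
      by (rule sb_eq_Cons)
    also have "sb_eq n (a # r @ Y) (Sig j # s @ Y)"
      using sb_eq_append_right[OF complement_sb_eq[OF rs a]] j by simp
    finally show ?thesis ..
  qed (auto intro: sb_eq.sb_refl)
  then obtain Z where Z: "sb_eq n (a # Delta n) (Delta n @ Z)"
    using left_divisible_by_sigmas_Delta by blast
  then obtain a' where "Z = [a']"
    using sb_eq_length[OF Z] by (cases Z) auto
  moreover have "valid_word n (Delta n @ Z)"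
    using sb_eq_valid[OF Z] a valid_word_Delta by simp
  ultimately show ?thesis
    using that[of a'] Z by simp
qed

lemma Delta_conjugate:
  "valid_word n Y \<Longrightarrow> \<exists>Y'. valid_word n Y' \<and> sb_eq n (Y @ Delta n) (Delta n @ Y')"
proof (induction Y)
  case Nil
  show ?case by (intro exI[of _ "[]"]) (simp add: sb_eq.sb_refl)
next
  case (Cons a Y)
  then obtain Y' where Y': "valid_word n Y'" "sb_eq n (Y @ Delta n) (Delta n @ Y')"
    by auto
  obtain a' where a': "valid_letter n a'" "sb_eq n (a # Delta n) (Delta n @ [a'])"
    using letter_Delta_conjugate Cons.prems by auto
  have "sb_eq n (a # Y @ Delta n) (a # Delta n @ Y')"
    using sb_eq_Cons[OF Y'(2)] .
  also have "sb_eq n (a # Delta n @ Y') (Delta n @ a' # Y')"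
    using sb_eq_append_right[OF a'(2)] by simp
  finally show ?case
    using a' Y' by (intro exI[of _ "a' # Y'"]) simp
qed

lemma right_divisible_by_sigmas_Delta:
  assumes valid: "valid_word n W" and divisible: "\<forall>i\<in>{1..n-1}. \<exists>B. sb_eq n W (B @ [Sig i])"
  shows "\<exists>Z. valid_word n Z \<and> sb_eq n W (Delta n @ Z)"
proof -
  have "\<forall>i\<in>{1..n-1}. \<exists>A. sb_eq n (rev W) (Sig i # A)"
    using divisible sb_eq_rev by fastforce
  then obtain Z where Z: "sb_eq n (rev W) (Delta n @ Z)"
    using left_divisible_by_sigmas_Delta by blast
  have "valid_word n (rev Z)"
    using sb_eq_valid[OF Z] valid by (simp add: valid_word_iff)
  then obtain Z' where Z': "valid_word n Z'" "sb_eq n (rev Z @ Delta n) (Delta n @ Z')"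
    using Delta_conjugate by blast
  have "sb_eq n W (rev Z @ rev (Delta n))"
    using sb_eq_rev[OF Z] by simp
  also have "sb_eq n (rev Z @ rev (Delta n)) (rev Z @ Delta n)"
    using sb_eq_append_left[OF sb_eq_sym[OF Delta_sb_eq_rev]] .
  also note Z'(2)
  finally show ?thesis
    using Z'(1) by blast
qed

theorem proposition2p4:
  fixes n :: nat and W :: sb_word
  assumes "n \<ge> 2"
    and "valid_word n W"
    and "(\<exists>A. (\<forall>i\<in>{1..n-1}. valid_word n (A i) \<and> sb_eq n W (Sig i # A i)))
         \<or> (\<exists>B. (\<forall>i\<in>{1..n-1}. valid_word n (B i) \<and> sb_eq n W (B i @ [Sig i])))"
  shows "\<exists>Z. valid_word n Z \<and> sb_eq n W (Delta n @ Z)"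
  using assms(3)
proof (elim disjE exE)
  fix A
  assume "\<forall>i\<in>{1..n-1}. valid_word n (A i) \<and> sb_eq n W (Sig i # A i)"
  then obtain Z where Z: "sb_eq n W (Delta n @ Z)"
    using left_divisible_by_sigmas_Delta by blast
  moreover have "valid_word n Z"
    using sb_eq_valid[OF Z assms(2)] by simp
  ultimately show ?thesis by blast
next
  fix B
  assume "\<forall>i\<in>{1..n-1}. valid_word n (B i) \<and> sb_eq n W (B i @ [Sig i])"
  then show ?thesis
    using right_divisible_by_sigmas_Delta[OF assms(2)] by blast
qed

end
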